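(* Let $t$ and $\delta\ge2$ be integers and for $t^-\in\{t-\delta+2,\dots,t\}$ define $$\hat\mu_{t^-}=\frac{\sum_{i=t^-}^{t}\big(i-\frac{2t-\delta+1}{2}\big)}{\sum_{i=t-\delta+1}^{t}\big(i-(t-\delta+1)\big)\big(i-\frac{2t-\delta+1}{2}\big)}.$$ Then $\hat\mu_t=1$ when $\delta=2$; $\hat\mu_t=\hat\mu_{t-1}$ when $\delta=3$; and when $\delta>3$, $$\hat\mu_t<\dots<\hat\mu_{\lfloor\frac{2t-\delta+2}{2}\rfloor}=\hat\mu_{\lceil\frac{2t-\delta+2}{2}\rceil}>\dots>\hat\mu_{t-\delta+2}.$$ *)

theory Defs
  imports Complex_Main
begin

definition mu_hat :: "int \<Rightarrow> int \<Rightarrow> int \<Rightarrow> real" where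
  "mu_hat t \<delta> tm =
     (\<Sum>i\<in>{tm..t}. (of_int i - of_int (2*t - \<delta> + 1) / 2)) /
     (\<Sum>i\<in>{t-\<delta>+1..t}. of_int (i - (t - \<delta> + 1)) * (of_int i - of_int (2*t - \<delta> + 1) / 2))"

end

theory Submission imports Defs begin

text \<open>Write \<open>c = (2t - \<delta> + 1)/2\<close> for the midpoint of the window \<open>{t - \<delta> + 1..t}\<close>.
  The denominator \<open>D\<close> of \<open>mu_hat\<close> does not depend on \<open>t\<^sup>-\<close>, and it is positive:
  since the deviations \<open>i - c\<close> sum to zero over the window, \<open>D\<close> equals the sum of
  their squares. Hence \<open>mu_hat t \<delta> j - mu_hat t \<delta> (j + 1) = (j - c) / D\<close> has the sign
  of \<open>j - c\<close>: the sequence increases up to the midpoint, is constant across it when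
  \<open>c\<close> is an integer (odd \<open>\<delta>\<close>), and decreases after it.\<close>

lemma sum_Icc_centered_eq_0:
  fixes a b :: int
  shows "(\<Sum>i\<in>{a..b}. of_int i - of_int (a + b) / 2) = (0::real)"
proof -
  let ?S = "\<Sum>i\<in>{a..b}. of_int i - of_int (a + b) / (2::real)"
  have "?S = (\<Sum>i\<in>{a..b}. of_int (a + b - i) - of_int (a + b) / 2)"
    by (rule sum.reindex_bij_witness[where i = "\<lambda>i. a + b - i" and j = "\<lambda>i. a + b - i"]) auto
  also have "\<dots> = (\<Sum>i\<in>{a..b}. - (of_int i - of_int (a + b) / 2))"
    by (intro sum.cong) (simp_all add: field_simps)
  also have "\<dots> = - ?S"
    by (rule sum_negf)
  finally show ?thesis by simp
qed

lemma sum_Icc_moment_pos: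
  fixes a b :: int
  assumes "a < b"
  shows "0 < (\<Sum>i\<in>{a..b}. of_int (i - a) * (of_int i - of_int (a + b) / (2::real)))"
proof -
  define c :: real where "c = of_int (a + b) / 2"
  have "(\<Sum>i\<in>{a..b}. of_int (i - a) * (of_int i - c))
      = (\<Sum>i\<in>{a..b}. (of_int i - c)\<^sup>2) + (c - of_int a) * (\<Sum>i\<in>{a..b}. of_int i - c)"
    by (simp add: sum_distrib_left sum.distrib[symmetric] power2_eq_square algebra_simps)
  also have "\<dots> = (\<Sum>i\<in>{a..b}. (of_int i - c)\<^sup>2)"
    using sum_Icc_centered_eq_0[of a b] by (simp add: c_def)
  also have "0 < \<dots>"
    using assms by (intro sum_pos2[where i = b]) (auto simp: c_def)
  finally show ?thesis by (simp add: c_def)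
qed

lemma floor_ceiling_half_cases:
  fixes k :: int
  obtains "\<lceil>of_int k / (2::real)\<rceil> = \<lfloor>of_int k / (2::real)\<rfloor>"
    | n where "k = 2 * n + 1" "\<lfloor>of_int k / (2::real)\<rfloor> = n" "\<lceil>of_int k / (2::real)\<rceil> = n + 1"
proof (cases "even k")
  case True
  then obtain n where "k = 2 * n"
    by (elim evenE)
  then show ?thesis
    using that(1) by simp
next
  case False
  then obtain n where k: "k = 2 * n + 1"
    by (elim oddE)
  have "\<lfloor>of_int k / (2::real)\<rfloor> = n" "\<lceil>of_int k / (2::real)\<rceil> = n + 1"
    by (auto simp: k intro!: floor_unique ceiling_unique)
  with k that(2) show ?thesis
    by blast
qed

lemma sgn_mu_hat_diff:
  fixes t \<delta> j :: int
  assumes "\<delta> \<ge> 2" and "j \<le> t"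
  shows "sgn (mu_hat t \<delta> j - mu_hat t \<delta> (j + 1)) = sgn (of_int (2 * j - (2 * t - \<delta> + 1)) :: real)"
proof -
  let ?D = "\<Sum>i\<in>{t-\<delta>+1..t}. of_int (i - (t - \<delta> + 1)) * (of_int i - of_int (2*t - \<delta> + 1) / (2::real))"
  have "0 < ?D"
    using sum_Icc_moment_pos[of "t - \<delta> + 1" t] assms(1) by (simp add: algebra_simps)
  have "{j..t} = insert j {j+1..t}"
    using assms(2) by auto
  then have "mu_hat t \<delta> j - mu_hat t \<delta> (j + 1) = (of_int j - of_int (2*t - \<delta> + 1) / 2) / ?D"
    unfolding mu_hat_def by (simp add: diff_divide_distrib[symmetric])
  also have "\<dots> = of_int (2 * j - (2 * t - \<delta> + 1)) / (2 * ?D)"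
    by (simp add: field_simps)
  also have "sgn \<dots> = sgn (of_int (2 * j - (2 * t - \<delta> + 1)) :: real)"
    using \<open>0 < ?D\<close> by (simp add: sgn_divide)
  finally show ?thesis .
qed

lemma mu_hat_less_succ_below_midpoint:
  assumes "\<delta> \<ge> 2" and "2 * j < 2 * t - \<delta> + 1"
  shows "mu_hat t \<delta> j < mu_hat t \<delta> (j + 1)"
  using sgn_mu_hat_diff[of \<delta> j t] assms by (simp add: sgn_if split: if_splits)

lemma mu_hat_eq_succ_at_midpoint:
  assumes "\<delta> \<ge> 2" and "2 * j = 2 * t - \<delta> + 1"
  shows "mu_hat t \<delta> j = mu_hat t \<delta> (j + 1)"
  using sgn_mu_hat_diff[of \<delta> j t] assms by (simp add: sgn_if split: if_splits)

lemma mu_hat_succ_less_above_midpoint: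
  assumes "\<delta> \<ge> 2" and "2 * t - \<delta> + 1 < 2 * j" and "j \<le> t"
  shows "mu_hat t \<delta> (j + 1) < mu_hat t \<delta> j"
  using sgn_mu_hat_diff[of \<delta> j t] assms by (simp add: sgn_if split: if_splits)

theorem lemma4:
  fixes t \<delta> :: int
  assumes "\<delta> \<ge> 2"
  shows "(\<delta> = 2 \<longrightarrow> mu_hat t \<delta> t = 1)
       \<and> (\<delta> = 3 \<longrightarrow> mu_hat t \<delta> t = mu_hat t \<delta> (t - 1))
       \<and> (\<delta> > 3 \<longrightarrow>
            (\<forall>j. \<lceil>of_int (2*t - \<delta> + 2) / (2::real)\<rceil> \<le> j \<and> j < t
                   \<longrightarrow> mu_hat t \<delta> (j + 1) < mu_hat t \<delta> j)
          \<and> mu_hat t \<delta> \<lfloor>of_int (2*t - \<delta> + 2) / (2::real)\<rfloor>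
              = mu_hat t \<delta> \<lceil>of_int (2*t - \<delta> + 2) / (2::real)\<rceil>
          \<and> (\<forall>j. t - \<delta> + 2 \<le> j \<and> j < \<lfloor>of_int (2*t - \<delta> + 2) / (2::real)\<rfloor>
                   \<longrightarrow> mu_hat t \<delta> j < mu_hat t \<delta> (j + 1)))"
proof -
  let ?m = "of_int (2*t - \<delta> + 2) / (2::real)"
  have "{t - 2 + 1..t} = {t - 1, t}"
    by auto
  then have "\<delta> = 2 \<longrightarrow> mu_hat t \<delta> t = 1"
    unfolding mu_hat_def by (simp add: field_simps)
  moreover have "\<delta> = 3 \<longrightarrow> mu_hat t \<delta> t = mu_hat t \<delta> (t - 1)"
    using mu_hat_eq_succ_at_midpoint[of 3 "t - 1" t] by simp
  moreover have "mu_hat t \<delta> (j + 1) < mu_hat t \<delta> j" if "\<lceil>?m\<rceil> \<le> j" "j < t" for j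
    using that assms by (intro mu_hat_succ_less_above_midpoint) (simp_all add: ceiling_le_iff)
  moreover have "mu_hat t \<delta> j < mu_hat t \<delta> (j + 1)" if "j < \<lfloor>?m\<rfloor>" for j
    using that assms by (intro mu_hat_less_succ_below_midpoint) (simp_all add: less_floor_iff)
  moreover have "mu_hat t \<delta> \<lfloor>?m\<rfloor> = mu_hat t \<delta> \<lceil>?m\<rceil>"
    by (cases "2*t - \<delta> + 2" rule: floor_ceiling_half_cases)
      (use mu_hat_eq_succ_at_midpoint[OF assms] in auto)
  ultimately show ?thesis
    by blast
qed

end
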